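(* Let $R$ be a strongly $\pi$-$*$-regular ring and $e$ an idempotent of $R$. Then $eRe$, with the involution restricted from $R$, is strongly $\pi$-$*$-regular.
   Context: A $*$-ring is a ring with identity with an involution $*$. A projection is $p$ with $p^2=p=p^*$. A $*$-ring is strongly $\pi$-$*$-regular if for every $a$ there exist a projection $e'$, a unit $u$ and $m\ge1$ with $a^m=e'u$ and $a,e',u$ pairwise commuting. (In such a ring every idempotent is a projection, so $(eRe)^*=eRe$ and $eRe$ is a $*$-ring with identity $e$.) *)

theory Defs
  imports Main
begin

definition involution :: "('a::ring_1 \<Rightarrow> 'a) \<Rightarrow> bool" where
  "involution st \<longleftrightarrow>
     (\<forall>x y. st (x + y) = st x + st y) \<and>
     (\<forall>x y. st (x * y) = st y * st x) \<and>
     (\<forall>x. st (st x) = x)"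

text \<open>Strong pi-star-regularity of a ring with carrier S, identity e and involution st
  (S is assumed to be closed under the ring operations and st, with e the identity of S).\<close>
definition spsr_on :: "'a::ring_1 set \<Rightarrow> 'a \<Rightarrow> ('a \<Rightarrow> 'a) \<Rightarrow> bool" where
  "spsr_on S e st \<longleftrightarrow>
     (\<forall>a\<in>S. \<exists>p\<in>S. \<exists>u\<in>S. \<exists>m::nat. m \<ge> 1 \<and>
        p * p = p \<and> st p = p \<and>
        (\<exists>v\<in>S. u * v = e \<and> v * u = e) \<and>
        a ^ m = p * u \<and>
        a * p = p * a \<and> a * u = u * a \<and> p * u = u * p)"

definition strongly_pi_star_regular :: "('a::ring_1 \<Rightarrow> 'a) \<Rightarrow> bool" where
  "strongly_pi_star_regular st \<longleftrightarrow> involution st \<and> spsr_on UNIV 1 st"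

definition corner :: "'a::ring_1 \<Rightarrow> 'a set" where
  "corner e = {e * x * e | x. True}"

end

theory Submission
  imports Defs
begin

text \<open>Every idempotent e of R is a projection: writing e = e^m = q u with q a projection and u a
  unit commuting with e, one gets q = e u^-1, hence q e = q and also q e = e, so e = q.
  For a in eRe with a^m = q u as in R, the projection q = a^m u^-1 = u^-1 a^m already lies in eRe,
  but u need not; it is replaced by the unit q u + (e - q) of eRe, whose inverse is
  q u^-1 + (e - q), and which still satisfies a^m = q (q u + (e - q)).\<close>

lemma mem_corner_iff:
  fixes e x :: "'a::ring_1"
  assumes "e * e = e"
  shows "x \<in> corner e \<longleftrightarrow> e * x = x \<and> x * e = x"
proof
  assume "x \<in> corner e"
  then obtain y where x: "x = e * y * e" by (auto simp: corner_def)
  show "e * x = x \<and> x * e = x"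
    unfolding x by (metis assms mult.assoc)
next
  assume "e * x = x \<and> x * e = x"
  then have "x = e * x * e" by simp
  then show "x \<in> corner e" unfolding corner_def by blast
qed

lemma commute_with_inverse:
  fixes u v x :: "'a::ring_1"
  assumes "u * v = 1" "v * u = 1" "x * u = u * x"
  shows "x * v = v * x"
proof -
  have "v * x = v * x * (u * v)" using assms(1) by simp
  also have "\<dots> = v * (x * u) * v" by (simp add: mult.assoc)
  also have "\<dots> = (v * u) * x * v" using assms(3) by (simp add: mult.assoc)
  also have "\<dots> = x * v" using assms(2) by simp
  finally show ?thesis by simp
qed

lemma idempotent_power:
  fixes e :: "'a::monoid_mult"
  assumes "e * e = e" "m \<ge> 1"
  shows "e ^ m = e"
  using assms(2)
proof (induction m rule: dec_induct)
  case (step n)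
  then show ?case using assms(1) by (simp add: power_Suc2)
qed simp

lemma idempotent_selfadjoint:
  fixes st :: "'a::ring_1 \<Rightarrow> 'a" and e :: 'a
  assumes "spsr_on UNIV 1 st" "e * e = e"
  shows "st e = e"
proof -
  obtain q u m v where "m \<ge> 1" and q: "q * q = q" "st q = q"
    and uv: "u * v = 1" "v * u = 1" and em: "e ^ m = q * u" and eu: "e * u = u * e"
    using assms(1) unfolding spsr_on_def by blast
  have e_qu: "e = q * u" using em idempotent_power[OF assms(2) \<open>m \<ge> 1\<close>] by simp
  then have q_ev: "q = e * v" using uv(1) by (simp add: mult.assoc)
  have "q * e = e" using e_qu q(1) by (metis mult.assoc)
  moreover have "q * e = q"
    using q_ev assms(2) commute_with_inverse[OF uv eu] by (metis mult.assoc)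
  ultimately show ?thesis using q(2) by simp
qed

lemma involution_corner_subset:
  fixes st :: "'a::ring_1 \<Rightarrow> 'a" and e :: 'a
  assumes "involution st" "st e = e"
  shows "st ` corner e \<subseteq> corner e"
proof
  fix y assume "y \<in> st ` corner e"
  then obtain x where "y = st (e * x * e)" by (auto simp: corner_def)
  also have "\<dots> = e * st x * e"
    using assms unfolding involution_def by (simp add: mult.assoc)
  finally show "y \<in> corner e" unfolding corner_def by blast
qed

context
  fixes e q u :: "'a::ring_1"
  assumes idem: "e * e = e" "q * q = q"
    and q_corner: "e * q = q" "q * e = q"
    and qu: "q * u = u * q"
begin

lemma corner_unit_mem: "q * u + (e - q) \<in> corner e"
proof -
  have "e * (q * u) = q * u" using q_corner by (simp flip: mult.assoc)
  moreover have "q * u * e = q * u" using qu q_corner by (metis mult.assoc)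
  ultimately show ?thesis
    using idem q_corner by (simp add: mem_corner_iff algebra_simps)
qed

lemma corner_unit_mult:
  assumes "u * v = 1"
  shows "(q * u + (e - q)) * (q * v + (e - q)) = e"
proof -
  have "q * u * (q * v) = q"
    by (metis assms idem(2) qu mult.assoc mult_1_right)
  moreover have "q * u * e = q * u" "q * u * q = q * u"
    using qu q_corner idem by (metis mult.assoc)+
  moreover have "e * (q * v) = q * v" "q * (q * v) = q * v"
    using q_corner idem by (simp_all flip: mult.assoc)
  ultimately show ?thesis
    using idem q_corner by (simp add: algebra_simps)
qed

end

lemma spsr_on_corner:
  fixes st :: "'a::ring_1 \<Rightarrow> 'a" and e :: 'a
  assumes "spsr_on UNIV 1 st" "e * e = e"
  shows "spsr_on (corner e) e st"
  unfolding spsr_on_def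
proof
  fix a assume "a \<in> corner e"
  then have ea: "e * a = a" and ae: "a * e = a" using mem_corner_iff assms(2) by blast+
  obtain q u m v where "m \<ge> 1" and q: "q * q = q" "st q = q"
    and uv: "u * v = 1" "v * u = 1" and am: "a ^ m = q * u"
    and comm: "a * q = q * a" "a * u = u * a" "q * u = u * q"
    using assms(1) unfolding spsr_on_def by blast
  have qv: "q * v = v * q" and amv: "a ^ m * v = v * a ^ m"
    using commute_with_inverse[OF uv] comm(3) power_commuting_commutes[OF comm(2)] by blast+
  have q_am: "q = a ^ m * v" using am uv(1) by (simp add: mult.assoc)
  obtain k where "m = Suc k" using \<open>m \<ge> 1\<close> by (cases m) auto
  then have "e * a ^ m = a ^ m" "a ^ m * e = a ^ m"
    using ea ae by (metis power_Suc mult.assoc, metis power_Suc2 mult.assoc)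
  then have eq: "e * q = q" and qe: "q * e = q"
    using q_am amv by (metis mult.assoc)+
  have a_qu: "a * (q * u) = q * u * a" and q_qu: "q * (q * u) = q * u" "q * u * q = q * u"
    using comm q(1) by (metis mult.assoc)+
  define w where "w = q * u + (e - q)"
  have "a * w = w * a"
    unfolding w_def using a_qu by (simp add: algebra_simps ea ae comm(1))
  moreover have "q * w = w * q" "a ^ m = q * w"
    unfolding w_def using q(1) q_qu eq qe am by (simp_all add: algebra_simps)
  moreover have "q \<in> corner e" using eq qe assms(2) by (simp add: mem_corner_iff)
  moreover have "w \<in> corner e" "q * v + (e - q) \<in> corner e"
    "w * (q * v + (e - q)) = e" "(q * v + (e - q)) * w = e"
    unfolding w_def
    using corner_unit_mem[OF assms(2) q(1) eq qe] corner_unit_mult[OF assms(2) q(1) eq qe]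
      comm(3) qv uv by blast+
  ultimately show "\<exists>p\<in>corner e. \<exists>u\<in>corner e. \<exists>m. 1 \<le> m \<and> p * p = p \<and> st p = p \<and>
      (\<exists>v\<in>corner e. u * v = e \<and> v * u = e) \<and> a ^ m = p * u \<and>
      a * p = p * a \<and> a * u = u * a \<and> p * u = u * p"
    using \<open>m \<ge> 1\<close> q comm(1) by blast
qed

theorem corollary3p10:
  fixes st :: "'a::ring_1 \<Rightarrow> 'a" and e :: 'a
  assumes "strongly_pi_star_regular st"
    and "e * e = e"
  shows "st ` corner e \<subseteq> corner e \<and> spsr_on (corner e) e st"
proof -
  have "involution st" and spsr: "spsr_on UNIV 1 st"
    using assms(1) unfolding strongly_pi_star_regular_def by auto
  then show ?thesis
    using involution_corner_subset idempotent_selfadjoint[OF spsr assms(2)]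
      spsr_on_corner[OF spsr assms(2)] by blast
qed

end
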